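(* There are at least $2^{\mathfrak d}$ many totally imperfect Menger subsets of $2^\omega$.
   Context: $\mathfrak d$ is the least size of a dominating family in $(\omega^\omega,\le^* )$, where $a\le^*b$ means $\{n:a(n)>b(n)\}$ is finite. Menger: for every sequence $(\mathcal U_n)$ of open covers there are finite $\mathcal F_n\subseteq\mathcal U_n$ with $\bigcup_n\mathcal F_n$ a cover. Totally imperfect: contains no homeomorphic copy of $2^\omega$. *)

theory Defs
  imports "HOL-Analysis.Analysis" "HOL-Library.Equipollence"
begin

definition cantor_top :: "(nat \<Rightarrow> bool) topology" where
  "cantor_top = product_topology (\<lambda>_. discrete_topology (UNIV :: bool set)) (UNIV :: nat set)"

definition le_star :: "(nat \<Rightarrow> nat) \<Rightarrow> (nat \<Rightarrow> nat) \<Rightarrow> bool" where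
  "le_star a b \<longleftrightarrow> finite {n. a n > b n}"

definition dominating :: "(nat \<Rightarrow> nat) set \<Rightarrow> bool" where
  "dominating D \<longleftrightarrow> (\<forall>f. \<exists>g\<in>D. le_star f g)"

text \<open>D witnesses the cardinal d: a dominating family of least size.\<close>
definition dominating_min :: "(nat \<Rightarrow> nat) set \<Rightarrow> bool" where
  "dominating_min D \<longleftrightarrow> dominating D \<and> (\<forall>D'. dominating D' \<longrightarrow> D \<lesssim> D')"

definition menger_space :: "'a topology \<Rightarrow> bool" where
  "menger_space T \<longleftrightarrow>
     (\<forall>U :: nat \<Rightarrow> 'a set set.
        (\<forall>n. (\<forall>V\<in>U n. openin T V) \<and> \<Union>(U n) = topspace T) \<longrightarrow>
        (\<exists>F. (\<forall>n. finite (F n) \<and> F n \<subseteq> U n) \<and> \<Union>(\<Union>n. F n) = topspace T))"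

definition totally_imperfect :: "(nat \<Rightarrow> bool) set \<Rightarrow> bool" where
  "totally_imperfect X \<longleftrightarrow>
     \<not> (\<exists>Y. Y \<subseteq> X \<and> subtopology cantor_top Y homeomorphic_space cantor_top)"

end

theory Submission
  imports Defs
begin

text \<open>
  Well-order a dominating family \<open>D\<close> of minimal size \<open>\<mathfrak>d\<close> by its cardinal order. The
  predecessors of each \<open>a \<in> D\<close> form a family of size \<open>< \<mathfrak>d\<close>, hence not dominating, so some
  function escapes all of them; encoding it together with \<open>a\<close> into a strictly increasing
  \<open>scale a\<close> yields \<open>\<mathfrak>d\<close> functions whose \<open>\<le>\<^sup>*\<close>-bounded subfamilies all have size \<open>< \<mathfrak>d\<close>.
  For \<open>A \<subseteq> D\<close> let \<open>X\<^sub>A\<close> consist of the finite subsets of \<open>\<omega>\<close> and the ranges of \<open>scale a\<close>,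
  \<open>a \<in> A\<close>; distinct \<open>A\<close> give distinct \<open>X\<^sub>A\<close>.

  \<open>X\<^sub>A\<close> is Menger: given a sequence of open covers, the finite sets provide a function \<open>h\<^sub>1\<close>
  that handles every point having a gap \<open>[n, h\<^sub>1 n)\<close>; the points without such a gap have
  bounded enumerations, so there are \<open>< \<mathfrak>d\<close> of them and a single function escapes all their
  moduli. \<open>X\<^sub>A\<close> is totally imperfect: a Cantor set in \<open>X\<^sub>A\<close> can be shrunk to avoid the
  countably many finite sets; it is then a compact set of infinite sets, so their enumerations
  are uniformly bounded and it has size \<open>< \<mathfrak>d \<le> \<mathfrak>c\<close>, which is absurd.
\<close>

section \<open>The Cantor space\<close>

definition cylinder :: "(nat \<Rightarrow> bool) \<Rightarrow> nat \<Rightarrow> (nat \<Rightarrow> bool) set" where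
  "cylinder z m = {y. \<forall>i<m. y i = z i}"

lemma cylinder_antimono: "m \<le> m' \<Longrightarrow> cylinder z m' \<subseteq> cylinder z m"
  by (auto simp: cylinder_def)

lemma cylinder_cong: "(\<And>i. i < m \<Longrightarrow> z i = y i) \<Longrightarrow> cylinder z m = cylinder y m"
  by (auto simp: cylinder_def)

lemma topspace_cantor_top [simp]: "topspace cantor_top = UNIV"
  by (simp add: cantor_top_def topspace_product_topology)

lemma compact_space_cantor_top: "compact_space cantor_top"
  unfolding cantor_top_def compact_space_product_topology
  by (simp add: compact_space_discrete_topology)

lemma openin_cantor_top: "openin cantor_top W \<longleftrightarrow> (\<forall>z\<in>W. \<exists>m. cylinder z m \<subseteq> W)"
proof
  assume "openin cantor_top W"
  then have basic: "\<exists>U. finite {i. U i \<noteq> UNIV} \<and> z \<in> Pi\<^sub>E UNIV U \<and> Pi\<^sub>E UNIV U \<subseteq> W"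
    if "z \<in> W" for z
    using that by (simp add: cantor_top_def openin_product_topology_alt)
  show "\<forall>z\<in>W. \<exists>m. cylinder z m \<subseteq> W"
  proof
    fix z assume "z \<in> W"
    then obtain U where U: "finite {i. U i \<noteq> UNIV}" "z \<in> Pi\<^sub>E UNIV U" "Pi\<^sub>E UNIV U \<subseteq> W"
      using basic by blast
    obtain m where "{i. U i \<noteq> UNIV} \<subseteq> {..<m}"
      using finite_nat_bounded[OF U(1)] by blast
    then have m: "U i \<noteq> UNIV \<Longrightarrow> i < m" for i by blast
    have "y i \<in> U i" if "y \<in> cylinder z m" for y i
      using that U(2) m[of i] by (cases "U i = UNIV") (auto simp: cylinder_def PiE_iff)
    then have "cylinder z m \<subseteq> Pi\<^sub>E UNIV U" by (auto simp: PiE_iff)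
    with U(3) show "\<exists>m. cylinder z m \<subseteq> W" by blast
  qed
next
  assume cyl: "\<forall>z\<in>W. \<exists>m. cylinder z m \<subseteq> W"
  show "openin cantor_top W"
    unfolding cantor_top_def openin_product_topology_alt
  proof
    fix z assume "z \<in> W"
    then obtain m where m: "cylinder z m \<subseteq> W" using cyl by blast
    define U where "U i = {b. i < m \<longrightarrow> b = z i}" for i
    have "{i. U i \<noteq> UNIV} \<subseteq> {..<m}" by (auto simp: U_def)
    then have "finite {i. U i \<noteq> UNIV}" by (rule finite_subset) simp
    moreover have "Pi\<^sub>E UNIV U = cylinder z m"
      by (auto simp: PiE_iff U_def cylinder_def)
    ultimately show "\<exists>U. finite {i \<in> UNIV. U i \<noteq> topspace (discrete_topology UNIV)} \<and>
        (\<forall>i\<in>UNIV. openin (discrete_topology UNIV) (U i)) \<and> z \<in> Pi\<^sub>E UNIV U \<and> Pi\<^sub>E UNIV U \<subseteq> W"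
      using m by (intro exI[of _ U]) (auto simp: cylinder_def)
  qed
qed

lemma openin_subtopology_cantor_top_cylinder:
  assumes "openin (subtopology cantor_top X) V" "z \<in> V"
  obtains m where "X \<inter> cylinder z m \<subseteq> V"
proof -
  obtain W where W: "openin cantor_top W" "V = W \<inter> X"
    using assms(1) by (auto simp: openin_subtopology)
  then obtain m where "cylinder z m \<subseteq> W" using assms(2) openin_cantor_top by blast
  with W(2) that show ?thesis by blast
qed

definition finite_support :: "(nat \<Rightarrow> bool) set" where
  "finite_support = {z. finite {k. z k}}"

lemma countable_finite_support: "countable finite_support"
proof -
  have "z = (\<lambda>k. k \<in> {k. z k})" for z :: "nat \<Rightarrow> bool" by simp
  then have "finite_support \<subseteq> (\<lambda>S k. k \<in> S) ` {S. finite S}"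
    unfolding finite_support_def by blast
  then show ?thesis
    by (rule countable_subset) (rule countable_image[OF countable_Collect_finite])
qed

definition truncation :: "nat \<Rightarrow> (nat \<Rightarrow> bool) \<Rightarrow> nat \<Rightarrow> bool" where
  "truncation m z i \<longleftrightarrow> i < m \<and> z i"

lemma truncation_in_finite_support: "truncation m z \<in> finite_support"
  by (auto simp: finite_support_def truncation_def intro: finite_subset[of _ "{..<m}"])

lemma finite_range_truncation: "finite (range (truncation m))"
proof -
  have "range (truncation m) \<subseteq> (\<lambda>S i. i \<in> S) ` Pow {..<m}"
  proof
    fix y assume "y \<in> range (truncation m)"
    then obtain z where "y = truncation m z" by blast
    then have "y = (\<lambda>i. i \<in> {i. i < m \<and> z i})" by (auto simp: truncation_def)
    then show "y \<in> (\<lambda>S i. i \<in> S) ` Pow {..<m}" by blast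
  qed
  then show ?thesis by (rule finite_subset) simp
qed

section \<open>Cantor sets avoiding a countable set\<close>

definition diagonal_embedding :: "(nat \<Rightarrow> nat \<Rightarrow> bool) \<Rightarrow> (nat \<Rightarrow> bool) \<Rightarrow> nat \<Rightarrow> bool" where
  "diagonal_embedding q w j = (if even j then w (j div 2) else \<not> q (j div 2) j)"

lemma continuous_map_diagonal_embedding:
  "continuous_map cantor_top cantor_top (diagonal_embedding q)"
  unfolding cantor_top_def continuous_map_componentwise_UNIV diagonal_embedding_def
  using continuous_map_product_projection[of _ UNIV "\<lambda>_. discrete_topology (UNIV :: bool set)"]
  by auto

lemma inj_diagonal_embedding: "inj (diagonal_embedding q)"
proof (rule injI)
  fix w w' assume "diagonal_embedding q w = diagonal_embedding q w'"
  then have "diagonal_embedding q w (2 * k) = diagonal_embedding q w' (2 * k)" for k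
    by simp
  then show "w = w'" by (auto simp: diagonal_embedding_def)
qed

lemma diagonal_embedding_avoids: "diagonal_embedding q w \<noteq> q k"
proof
  assume "diagonal_embedding q w = q k"
  then have "diagonal_embedding q w (2 * k + 1) = q k (2 * k + 1)" by simp
  then show False by (simp add: diagonal_embedding_def)
qed

lemma cantor_embedding_avoiding_countable:
  assumes "countable Q"
  obtains e where "continuous_map cantor_top cantor_top e" "inj e" "range e \<inter> Q = {}"
proof
  let ?e = "diagonal_embedding (from_nat_into Q)"
  show "continuous_map cantor_top cantor_top ?e" "inj ?e"
    by (rule continuous_map_diagonal_embedding inj_diagonal_embedding)+
  show "range ?e \<inter> Q = {}"
    using subset_range_from_nat_into[OF assms] diagonal_embedding_avoids by blast
qed

lemma cantor_copy_avoiding_countable: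
  assumes "Y \<subseteq> X" "subtopology cantor_top Y homeomorphic_space cantor_top" "countable Q"
  obtains P where "continuous_map cantor_top cantor_top P" "inj P" "range P \<subseteq> X - Q"
proof -
  obtain f g where "homeomorphic_maps (subtopology cantor_top Y) cantor_top f g"
    using assms(2) unfolding homeomorphic_space_def by blast
  then have g: "continuous_map cantor_top (subtopology cantor_top Y) g"
    and f_g: "\<And>y. f (g y) = y"
    by (simp_all add: homeomorphic_maps_def)
  have "g -` Q \<subseteq> f ` Q" using f_g by (metis image_eqI subsetI vimageE)
  then have "countable (g -` Q)" using assms(3) by (meson countable_image countable_subset)
  then obtain e where e: "continuous_map cantor_top cantor_top e" "inj e" "range e \<inter> g -` Q = {}"
    by (rule cantor_embedding_avoiding_countable)
  show ?thesis
  proof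
    show "continuous_map cantor_top cantor_top (g \<circ> e)"
      using e(1) continuous_map_into_fulltopology[OF g] by (rule continuous_map_compose)
    show "inj (g \<circ> e)"
      using e(2) f_g by (metis inj_compose inj_on_inverseI)
    have "range g \<subseteq> Y"
      using continuous_map_image_subset_topspace[OF g] by simp
    then show "range (g \<circ> e) \<subseteq> X - Q"
      using assms(1) e(3) by auto
  qed
qed

section \<open>Strictly increasing functions\<close>

lemma strict_mono_le_if_agree_below:
  fixes F G :: "nat \<Rightarrow> nat"
  assumes F: "strict_mono F" and G: "strict_mono G" and "F n \<in> range G"
    and agree: "\<And>m. m < n \<Longrightarrow> F m = G m"
  shows "G n \<le> F n"
proof -
  obtain j where j: "F n = G j" using \<open>F n \<in> range G\<close> by blast
  have "\<not> j < n"
  proof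
    assume "j < n"
    then have "F j < F n" using F by (simp add: strict_mono_less)
    with j agree[OF \<open>j < n\<close>] show False by simp
  qed
  with j G show ?thesis by (simp add: strict_mono_less_eq)
qed

lemma strict_mono_eq_if_range_eq:
  fixes F G :: "nat \<Rightarrow> nat"
  assumes F: "strict_mono F" and G: "strict_mono G" and range: "range F = range G"
  shows "F = G"
proof
  fix n show "F n = G n"
  proof (induction n rule: less_induct)
    case (less n)
    have "F n \<in> range G" "G n \<in> range F" using range by (metis rangeI)+
    have "G n \<le> F n"
      using F G \<open>F n \<in> range G\<close> less.IH by (rule strict_mono_le_if_agree_below)
    moreover have "F n \<le> G n"
      using G F \<open>G n \<in> range F\<close> by (rule strict_mono_le_if_agree_below) (simp add: less.IH)
    ultimately show ?case by simp
  qed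
qed

definition range_char :: "(nat \<Rightarrow> nat) \<Rightarrow> nat \<Rightarrow> bool" where
  "range_char F = (\<lambda>k. k \<in> range F)"

lemma range_char_not_finite_support:
  "strict_mono F \<Longrightarrow> range_char F \<notin> finite_support"
  by (simp add: finite_support_def range_char_def range_inj_infinite strict_mono_imp_inj_on)

lemma range_char_inject:
  assumes "strict_mono F" "strict_mono G" "range_char F = range_char G"
  shows "F = G"
proof (rule strict_mono_eq_if_range_eq[OF assms(1,2)])
  show "range F = range G"
    using arg_cong[OF assms(3), of Collect] by (simp add: range_char_def)
qed

lemma strict_mono_less_if_counted:
  fixes F :: "nat \<Rightarrow> nat"
  assumes F: "strict_mono F" and count: "i < card {k. k < M \<and> k \<in> range F}"
  shows "F i < M"
proof (rule ccontr)
  assume "\<not> F i < M"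
  then have "j < i" if "F j < M" for j
  proof -
    have "F j < F i" using that \<open>\<not> F i < M\<close> by linarith
    then show ?thesis using F by (simp add: strict_mono_less)
  qed
  then have "{k. k < M \<and> k \<in> range F} \<subseteq> F ` {..<i}" by blast
  then have "card {k. k < M \<and> k \<in> range F} \<le> card (F ` {..<i})"
    by (rule card_mono[rotated]) simp
  also have "\<dots> \<le> i"
    using card_image_le[of "{..<i}" F] by simp
  finally show False using count by simp
qed

lemma le_star_if_counted:
  assumes F: "strict_mono F" and count: "\<And>i. i < card {k. k < G i \<and> range_char F k}"
  shows "le_star F G"
proof -
  have "F i < G i" for i
    using strict_mono_less_if_counted[OF F] count[of i] by (simp add: range_char_def)
  then have "{n. F n > G n} = {}" using less_asym by blast
  then show ?thesis by (simp add: le_star_def)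
qed

fun gap_bound :: "(nat \<Rightarrow> nat) \<Rightarrow> nat \<Rightarrow> nat" where
  "gap_bound h 0 = h 0"
| "gap_bound h (Suc k) = (\<Sum>j\<le>gap_bound h k. h j)"

lemma strict_mono_less_gap_bound:
  fixes F :: "nat \<Rightarrow> nat"
  assumes F: "strict_mono F" and meets: "\<And>n. \<exists>i\<in>range F. n \<le> i \<and> i < h n"
  shows "F k < gap_bound h k"
proof (induction k)
  case 0
  obtain j where "F j < h 0" using meets by blast
  moreover have "F 0 \<le> F j" using F by (simp add: strict_mono_less_eq)
  ultimately show ?case by simp
next
  case (Suc k)
  obtain j where j: "Suc (F k) \<le> F j" "F j < h (Suc (F k))" using meets by blast
  then have "F (Suc k) \<le> F j" using F by (simp add: Suc_le_eq strict_mono_less strict_mono_less_eq)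
  also have "F j < h (Suc (F k))" by fact
  also have "h (Suc (F k)) \<le> (\<Sum>j\<le>gap_bound h k. h j)"
    using Suc.IH by (intro member_le_sum) auto
  finally show ?case by simp
qed

lemma gap_if_not_le_star_gap_bound:
  assumes "strict_mono F" "\<not> le_star F (gap_bound h)"
  obtains n where "\<And>i. n \<le> i \<Longrightarrow> i < h n \<Longrightarrow> i \<notin> range F"
proof -
  have "\<not> (\<forall>n. \<exists>i\<in>range F. n \<le> i \<and> i < h n)"
  proof
    assume "\<forall>n. \<exists>i\<in>range F. n \<le> i \<and> i < h n"
    then have "F n < gap_bound h n" for n
      using strict_mono_less_gap_bound[OF assms(1)] by blast
    then have "{n. F n > gap_bound h n} = {}"
      using less_asym by blast
    with assms(2) show False by (simp add: le_star_def)
  qed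
  with that show ?thesis by blast
qed

section \<open>Compactness bounds enumerations\<close>

lemma compact_space_increasing_cover:
  fixes Op :: "nat \<Rightarrow> 'a set"
  assumes "compact_space X" and open_Op: "\<And>M. openin X (Op M)" and "mono Op"
    and cover: "topspace X \<subseteq> (\<Union>M. Op M)"
  obtains M where "topspace X \<subseteq> Op M"
proof -
  obtain FF where "finite FF" "FF \<subseteq> range Op" "topspace X \<subseteq> \<Union>FF"
    using \<open>compact_space X\<close>[unfolded compact_space_alt, rule_format, of "range Op"] open_Op cover
    by auto
  then obtain S where S: "finite S" "topspace X \<subseteq> \<Union>(Op ` S)"
    by (metis finite_subset_image)
  have "Op m \<subseteq> Op (Max (insert 0 S))" if "m \<in> S" for m
    using that S(1) by (intro monoD[OF \<open>mono Op\<close>]) simp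
  with S(2) have "topspace X \<subseteq> Op (Max (insert 0 S))" by blast
  then show ?thesis by (rule that)
qed

lemma openin_cantor_top_count: "openin cantor_top {z. i < card {k. k < M \<and> z k}}"
proof -
  have "{k. k < M \<and> y k} = {k. k < M \<and> z k}" if "y \<in> cylinder z M" for y z
    using that by (auto simp: cylinder_def)
  then have "cylinder z M \<subseteq> {z. i < card {k. k < M \<and> z k}}"
    if "i < card {k. k < M \<and> z k}" for z
    using that by auto
  then show ?thesis unfolding openin_cantor_top by blast
qed

lemma uniform_counting_bound:
  assumes P: "continuous_map cantor_top cantor_top P" and infinite_P: "\<And>w. infinite {k. P w k}"
  obtains G where "\<And>w i. i < card {k. k < G i \<and> P w k}"
proof -
  have "\<exists>M. \<forall>w. i < card {k. k < M \<and> P w k}" for i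
  proof -
    define Op where "Op M = {w. i < card {k. k < M \<and> P w k}}" for M
    have "openin cantor_top (Op M)" for M
      using openin_continuous_map_preimage[OF P openin_cantor_top_count] by (simp add: Op_def)
    moreover have "mono Op"
    proof
      fix M M' :: nat assume "M \<le> M'"
      then have "card {k. k < M \<and> P w k} \<le> card {k. k < M' \<and> P w k}" for w
        by (intro card_mono) auto
      then show "Op M \<subseteq> Op M'" unfolding Op_def by (auto intro: less_le_trans)
    qed
    moreover have "topspace cantor_top \<subseteq> (\<Union>M. Op M)"
    proof
      fix w
      obtain B where B: "B \<subseteq> {k. P w k}" "finite B" "card B = Suc i"
        using infinite_arbitrarily_large[OF infinite_P] by blast
      then have "B \<subseteq> {k. k < Suc (Max B) \<and> P w k}"
        by (auto simp: less_Suc_eq_le)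
      then have "card B \<le> card {k. k < Suc (Max B) \<and> P w k}"
        by (rule card_mono[rotated]) simp
      with B(3) have "w \<in> Op (Suc (Max B))" by (simp add: Op_def)
      then show "w \<in> (\<Union>M. Op M)" by blast
    qed
    ultimately obtain M where "topspace cantor_top \<subseteq> Op M"
      by (rule compact_space_increasing_cover[OF compact_space_cantor_top])
    then show ?thesis by (auto simp: Op_def)
  qed
  then have "\<forall>i. \<exists>M. \<forall>w. i < card {k. k < M \<and> P w k}" by blast
  then obtain G where "\<forall>i w. i < card {k. k < G i \<and> P w k}" by (auto dest: choice)
  with that show ?thesis by blast
qed

section \<open>A combinatorial criterion for the Menger property\<close>

locale cantor_subspace_covers =
  fixes X :: "(nat \<Rightarrow> bool) set" and U :: "nat \<Rightarrow> (nat \<Rightarrow> bool) set set"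
  assumes openin_cover: "\<And>n V. V \<in> U n \<Longrightarrow> openin (subtopology cantor_top X) V"
    and Union_cover: "\<And>n. \<Union>(U n) = X"
begin

definition cylinder_inside :: "nat \<Rightarrow> nat \<Rightarrow> (nat \<Rightarrow> bool) \<Rightarrow> bool" where
  "cylinder_inside n m z \<longleftrightarrow> (\<exists>V\<in>U n. X \<inter> cylinder z m \<subseteq> V)"

lemma cylinder_inside_mono: "cylinder_inside n m z \<Longrightarrow> m \<le> m' \<Longrightarrow> cylinder_inside n m' z"
  unfolding cylinder_inside_def using cylinder_antimono by blast

lemma cylinder_inside_cong:
  assumes "cylinder_inside n m z" "\<And>i. i < m \<Longrightarrow> z i = y i"
  shows "cylinder_inside n m y"
  using assms(1) cylinder_cong[OF assms(2)] unfolding cylinder_inside_def by simp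

definition modulus :: "nat \<Rightarrow> (nat \<Rightarrow> bool) \<Rightarrow> nat" where
  "modulus n z = (LEAST m. cylinder_inside n m z)"

lemma cylinder_inside_modulus:
  assumes "z \<in> X"
  shows "cylinder_inside n (modulus n z) z"
proof -
  obtain V where V: "V \<in> U n" "z \<in> V" using Union_cover assms by blast
  obtain m where "X \<inter> cylinder z m \<subseteq> V"
    by (rule openin_subtopology_cantor_top_cylinder[OF openin_cover[OF V(1)] V(2)])
  with V(1) have "cylinder_inside n m z" by (auto simp: cylinder_inside_def)
  then show ?thesis unfolding modulus_def by (rule LeastI)
qed

text \<open>Only the finitely many cylinders of length \<open>h n\<close> matter at stage \<open>n\<close>.\<close>
lemma finite_subcovers_if_caught:
  assumes caught: "\<And>z. z \<in> X \<Longrightarrow> \<exists>n. cylinder_inside n (h n) z"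
  shows "\<exists>F. (\<forall>n. finite (F n) \<and> F n \<subseteq> U n) \<and> \<Union>(\<Union>n. F n) = X"
proof -
  define pick where "pick n z = (SOME V. V \<in> U n \<and> X \<inter> cylinder z (h n) \<subseteq> V)" for n z
  have pick: "pick n z \<in> U n \<and> X \<inter> cylinder z (h n) \<subseteq> pick n z"
    if "cylinder_inside n (h n) z" for n z
    unfolding pick_def by (rule someI_ex) (use that in \<open>auto simp: cylinder_inside_def\<close>)
  define F where "F n = pick n ` {y \<in> range (truncation (h n)). cylinder_inside n (h n) y}" for n
  have "finite (F n)" for n
    unfolding F_def using finite_range_truncation by auto
  moreover have "F n \<subseteq> U n" for n
    unfolding F_def using pick by blast
  moreover have "z \<in> \<Union>(\<Union>n. F n)" if "z \<in> X" for z
  proof -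
    obtain n where n: "cylinder_inside n (h n) z" using caught \<open>z \<in> X\<close> by blast
    let ?y = "truncation (h n) z"
    have agree: "z i = ?y i" if "i < h n" for i
      using that by (simp add: truncation_def)
    have "cylinder_inside n (h n) ?y" using n agree by (rule cylinder_inside_cong)
    moreover have "z \<in> X \<inter> cylinder ?y (h n)"
      using \<open>z \<in> X\<close> agree by (simp add: cylinder_def)
    ultimately have "z \<in> pick n ?y" "pick n ?y \<in> F n"
      using pick unfolding F_def by auto
    then show ?thesis by blast
  qed
  moreover have "\<Union>(\<Union>n. F n) \<subseteq> X"
    using calculation(2) Union_cover by blast
  ultimately show ?thesis by (intro exI[of _ F]) blast
qed

definition gap_modulus :: "nat \<Rightarrow> nat" where
  "gap_modulus n = n + Max (modulus n ` range (truncation n))"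

text \<open>A point vanishing on \<open>[n, gap_modulus n)\<close> agrees there with its truncation at \<open>n\<close>,
  whose modulus is bounded by \<open>gap_modulus n\<close>.\<close>
lemma cylinder_inside_if_gap:
  assumes X: "finite_support \<subseteq> X" and "z \<in> X"
    and gap: "\<And>i. n \<le> i \<Longrightarrow> i < gap_modulus n \<Longrightarrow> \<not> z i"
  shows "cylinder_inside n (gap_modulus n) z"
proof -
  let ?y = "truncation n z"
  have "?y \<in> X" using X truncation_in_finite_support by blast
  then have inside: "cylinder_inside n (modulus n ?y) ?y" by (rule cylinder_inside_modulus)
  have "modulus n ?y \<le> Max (modulus n ` range (truncation n))"
    using finite_range_truncation by (intro Max_ge) auto
  then have le: "modulus n ?y \<le> gap_modulus n" by (simp add: gap_modulus_def)
  have agree: "?y i = z i" if "i < gap_modulus n" for i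
    using gap[of i] that by (cases "n \<le> i") (auto simp: truncation_def)
  have "cylinder_inside n (modulus n ?y) z"
    using inside
  proof (rule cylinder_inside_cong)
    fix i assume "i < modulus n ?y"
    with le show "?y i = z i" by (intro agree) simp
  qed
  then show ?thesis using le by (rule cylinder_inside_mono)
qed

lemma cylinder_inside_if_finite_support:
  assumes "finite_support \<subseteq> X" "z \<in> finite_support"
  obtains n where "cylinder_inside n (gap_modulus n) z"
proof -
  obtain n where "{k. z k} \<subseteq> {..<n}"
    using finite_nat_bounded assms(2) unfolding finite_support_def by blast
  then have "\<And>i. n \<le> i \<Longrightarrow> \<not> z i" by auto
  with assms show ?thesis using cylinder_inside_if_gap that by blast
qed

lemma cylinder_inside_if_not_le_star:
  assumes "finite_support \<subseteq> X" "range_char F \<in> X"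
    and "strict_mono F" "\<not> le_star F (gap_bound gap_modulus)"
  obtains n where "cylinder_inside n (gap_modulus n) (range_char F)"
proof -
  obtain n where "\<And>i. n \<le> i \<Longrightarrow> i < gap_modulus n \<Longrightarrow> i \<notin> range F"
    using gap_if_not_le_star_gap_bound[OF assms(3,4)] by blast
  then have "cylinder_inside n (gap_modulus n) (range_char F)"
    using cylinder_inside_if_gap[OF assms(1,2)] by (simp add: range_char_def)
  then show ?thesis by (rule that)
qed

end

section \<open>Minimal dominating families\<close>

lemma le_star_trans: "le_star f g \<Longrightarrow> le_star g h \<Longrightarrow> le_star f h"
  unfolding le_star_def
  by (rule finite_subset[of _ "{n. f n > g n} \<union> {n. g n > h n}"]) auto

lemma le_le_star_trans: "(\<And>n. f n \<le> g n) \<Longrightarrow> le_star g h \<Longrightarrow> le_star f h"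
  unfolding le_star_def
  by (rule finite_subset[of _ "{n. g n > h n}"]) (auto intro: order.strict_trans2)

lemma nat_fun_lepoll_nat_pred: "(UNIV :: (nat \<Rightarrow> nat) set) \<lesssim> (UNIV :: (nat \<Rightarrow> bool) set)"
proof -
  define graph where "graph f k \<longleftrightarrow> snd (prod_decode k) = f (fst (prod_decode k))"
    for f :: "nat \<Rightarrow> nat" and k
  have "inj graph"
  proof (rule injI, rule ext)
    fix f g n assume "graph f = graph g"
    moreover have "graph f (prod_encode (n, f n))" by (simp add: graph_def)
    ultimately have "graph g (prod_encode (n, f n))" by simp
    then show "f n = g n" by (simp add: graph_def)
  qed
  then show ?thesis unfolding lepoll_def by blast
qed

locale minimal_dominating =
  fixes D :: "(nat \<Rightarrow> nat) set"
  assumes dominating_min_D: "dominating_min D"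
begin

definition below_d :: "'a set \<Rightarrow> bool" where
  "below_d S \<longleftrightarrow> \<not> D \<lesssim> S"

lemma below_d_not_dominating: "below_d S \<Longrightarrow> \<exists>f. \<forall>g\<in>S. \<not> le_star f g"
  using dominating_min_D unfolding below_d_def dominating_min_def dominating_def by blast

lemma below_d_subset: "below_d S \<Longrightarrow> T \<subseteq> S \<Longrightarrow> below_d T"
  unfolding below_d_def by (meson lepoll_trans subset_imp_lepoll)

lemma below_d_image: "below_d S \<Longrightarrow> below_d (f ` S)"
  unfolding below_d_def by (meson image_lepoll lepoll_trans)

lemma not_below_d_if_continuum_lepoll:
  assumes "(UNIV :: (nat \<Rightarrow> bool) set) \<lesssim> S"
  shows "\<not> below_d S"
proof -
  have "D \<lesssim> (UNIV :: (nat \<Rightarrow> nat) set)" by (rule subset_imp_lepoll) simp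
  also have "\<dots> \<lesssim> (UNIV :: (nat \<Rightarrow> bool) set)" by (rule nat_fun_lepoll_nat_pred)
  also note assms
  finally show ?thesis by (simp add: below_d_def)
qed

lemma infinite_D: "infinite D"
proof
  assume "finite D"
  define f where "f n = Suc (\<Sum>g\<in>D. g n)" for n
  obtain g where g: "g \<in> D" "le_star f g"
    using dominating_min_D unfolding dominating_min_def dominating_def by blast
  have "g n < f n" for n
    using member_le_sum[of g D "\<lambda>g. g n"] \<open>finite D\<close> g(1) by (simp add: f_def)
  with g(2) show False by (simp add: le_star_def)
qed

lemma below_d_insert:
  assumes "below_d S"
  shows "below_d (insert b S)"
  unfolding below_d_def
proof
  assume D: "D \<lesssim> insert b S"
  show False
  proof (cases "finite S")
    case True
    from infinite_D have "(UNIV :: nat set) \<lesssim> insert b S"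
      unfolding infinite_le_lepoll using D by (rule lepoll_trans)
    with True show False by (simp add: infinite_le_lepoll[symmetric])
  next
    case False
    from D have "D \<lesssim> S" using infinite_insert_lepoll[OF False] by (rule lepoll_trans)
    with assms show False by (simp add: below_d_def)
  qed
qed

lemma below_d_underS:
  assumes "a \<in> D"
  shows "below_d (underS (card_of D) a)"
  unfolding below_d_def
proof
  assume "D \<lesssim> underS (card_of D) a"
  then have "(card_of D, card_of (underS (card_of D) a)) \<in> ordLeq"
    using card_of_ordLeq[of D "underS (card_of D) a"] unfolding lepoll_def by blast
  moreover have "(card_of (underS (card_of D) a), card_of D) \<in> ordLess"
    using card_of_underS[OF card_of_Card_order] assms by (simp add: Field_card_of)
  ultimately show False by (simp add: not_ordLess_ordLeq)
qed

definition escape :: "(nat \<Rightarrow> nat) \<Rightarrow> nat \<Rightarrow> nat" where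
  "escape a = (SOME f. \<forall>g\<in>underS (card_of D) a. \<not> le_star f g)"

lemma not_le_star_escape:
  assumes "a \<in> D" "g \<in> underS (card_of D) a"
  shows "\<not> le_star (escape a) g"
proof -
  let ?P = "\<lambda>f. \<forall>g\<in>underS (card_of D) a. \<not> le_star f g"
  obtain f where "?P f"
    using below_d_not_dominating[OF below_d_underS[OF assms(1)]] by blast
  then have "?P (escape a)" unfolding escape_def by (rule someI[of ?P])
  with assms(2) show ?thesis by blast
qed

definition scale :: "(nat \<Rightarrow> nat) \<Rightarrow> nat \<Rightarrow> nat" where
  "scale a n = (\<Sum>i\<le>n. Suc (prod_encode (escape a i, a i)))"

lemma scale_Suc: "scale a (Suc n) = scale a n + Suc (prod_encode (escape a (Suc n), a (Suc n)))"
  by (simp add: scale_def)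

lemma strict_mono_scale: "strict_mono (scale a)"
  by (simp add: strict_mono_Suc_iff scale_Suc)

lemma inj_scale: "inj scale"
proof (rule injI, rule ext)
  fix a b n assume eq: "scale a = scale b"
  have "prod_encode (escape a n, a n) = prod_encode (escape b n, b n)"
  proof (cases n)
    case 0
    then show ?thesis using fun_cong[OF eq, of 0] by (simp add: scale_def)
  next
    case (Suc m)
    then show ?thesis using fun_cong[OF eq, of m] fun_cong[OF eq, of "Suc m"] by (simp add: scale_Suc)
  qed
  then show "a n = b n" by (simp add: prod_encode_eq)
qed

lemma escape_le_scale: "escape a n \<le> scale a n"
proof -
  have "escape a n \<le> prod_encode (escape a n, a n)" by (rule le_prod_encode_1)
  also have "\<dots> \<le> scale a n"
    unfolding scale_def by (rule order_trans[OF _ member_le_sum[of n]]) auto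
  finally show ?thesis .
qed

lemma not_le_star_scale:
  assumes "a \<in> D" "g \<in> underS (card_of D) a"
  shows "\<not> le_star (scale a) g"
proof
  assume "le_star (scale a) g"
  with escape_le_scale have "le_star (escape a) g" by (rule le_le_star_trans)
  with not_le_star_escape[OF assms] show False by contradiction
qed

text \<open>If \<open>G \<le>\<^sup>* b \<in> D\<close>, then only \<open>b\<close> and its predecessors can have their scale below \<open>G\<close>.\<close>
lemma below_d_bounded_scales: "below_d {a \<in> D. le_star (scale a) G}"
proof -
  obtain b where b: "b \<in> D" "le_star G b"
    using dominating_min_D unfolding dominating_min_def dominating_def by blast
  have "{a \<in> D. le_star (scale a) G} \<subseteq> insert b (underS (card_of D) b)"
  proof
    fix a assume a: "a \<in> {a \<in> D. le_star (scale a) G}"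
    show "a \<in> insert b (underS (card_of D) b)"
    proof (rule ccontr)
      assume a_notin: "a \<notin> insert b (underS (card_of D) b)"
      have "(a, b) \<in> card_of D \<or> (b, a) \<in> card_of D"
        using wo_rel.TOTALS[of "card_of D"] card_of_Well_order[of D] a b(1)
        by (simp add: wo_rel_def Field_card_of)
      then have "b \<in> underS (card_of D) a" using a_notin a by (auto simp: underS_def)
      then show False using not_le_star_scale a b(2) le_star_trans by blast
    qed
  qed
  then show ?thesis using below_d_insert[OF below_d_underS[OF b(1)]] below_d_subset by blast
qed

definition scale_subspace :: "(nat \<Rightarrow> nat) set \<Rightarrow> (nat \<Rightarrow> bool) set" where
  "scale_subspace A = finite_support \<union> (\<lambda>a. range_char (scale a)) ` A"

lemma inj_scale_subspace: "inj scale_subspace"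
proof (rule injI)
  have key: "A \<subseteq> B" if "scale_subspace A = scale_subspace B" for A B
  proof
    fix a assume "a \<in> A"
    then have "range_char (scale a) \<in> (\<lambda>a. range_char (scale a)) ` B"
      using that range_char_not_finite_support[OF strict_mono_scale]
      by (auto simp: scale_subspace_def)
    then obtain b where "b \<in> B" "range_char (scale a) = range_char (scale b)" by blast
    then show "a \<in> B"
      using range_char_inject[OF strict_mono_scale strict_mono_scale] injD[OF inj_scale] by blast
  qed
  show "scale_subspace A = scale_subspace B \<Longrightarrow> A = B" for A B
    using key[of A B] key[of B A] by blast
qed

text \<open>The moduli of the points without gaps are indexed by a bounded set of scales, hence do not
  dominate; one function escaping them, added to \<open>gap_modulus\<close>, catches every point.\<close>
lemma menger_scale_subspace:
  assumes "A \<subseteq> D"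
  shows "menger_space (subtopology cantor_top (scale_subspace A))"
  unfolding menger_space_def topspace_subtopology topspace_cantor_top Int_UNIV_left
proof (intro allI impI)
  let ?X = "scale_subspace A"
  fix U :: "nat \<Rightarrow> (nat \<Rightarrow> bool) set set"
  assume "\<forall>n. (\<forall>V\<in>U n. openin (subtopology cantor_top ?X) V) \<and> \<Union>(U n) = ?X"
  then interpret C: cantor_subspace_covers ?X U by unfold_locales auto
  have fin: "finite_support \<subseteq> ?X" by (simp add: scale_subspace_def)
  define E where "E = {a \<in> A. le_star (scale a) (gap_bound C.gap_modulus)}"
  have "below_d E"
    by (rule below_d_subset[OF below_d_bounded_scales]) (use assms in \<open>auto simp: E_def\<close>)
  then obtain h where h: "\<forall>g\<in>(\<lambda>a n. C.modulus n (range_char (scale a))) ` E. \<not> le_star h g"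
    using below_d_not_dominating below_d_image by blast
  have "\<exists>n. C.cylinder_inside n (C.gap_modulus n) z \<or> C.cylinder_inside n (h n) z"
    if z: "z \<in> ?X" for z
  proof (cases "z \<in> finite_support")
    case True
    then obtain n where "C.cylinder_inside n (C.gap_modulus n) z"
      by (rule C.cylinder_inside_if_finite_support[OF fin])
    then show ?thesis by blast
  next
    case False
    then obtain a where a: "a \<in> A" "z = range_char (scale a)"
      using z by (auto simp: scale_subspace_def)
    show ?thesis
    proof (cases "a \<in> E")
      case True
      then have "infinite {n. h n > C.modulus n z}" using h a(2) by (auto simp: le_star_def)
      then obtain n where "C.modulus n z < h n" using not_finite_existsD by blast
      then have "C.cylinder_inside n (h n) z"
        by (intro C.cylinder_inside_mono[OF C.cylinder_inside_modulus[OF z]]) simp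
      then show ?thesis by blast
    next
      case False
      with a(1) have "\<not> le_star (scale a) (gap_bound C.gap_modulus)" by (simp add: E_def)
      then obtain n where "C.cylinder_inside n (C.gap_modulus n) z"
        using C.cylinder_inside_if_not_le_star[OF fin _ strict_mono_scale] z a(2) by blast
      then show ?thesis by blast
    qed
  qed
  then have "\<exists>n. C.cylinder_inside n (C.gap_modulus n + h n) z" if "z \<in> ?X" for z
    using that C.cylinder_inside_mono le_add1 le_add2 by blast
  then show "\<exists>F. (\<forall>n. finite (F n) \<and> F n \<subseteq> U n) \<and> \<Union>(\<Union>n. F n) = ?X"
    by (rule C.finite_subcovers_if_caught)
qed

lemma totally_imperfect_scale_subspace:
  assumes "A \<subseteq> D"
  shows "totally_imperfect (scale_subspace A)"
  unfolding totally_imperfect_def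
proof
  assume "\<exists>Y. Y \<subseteq> scale_subspace A \<and> subtopology cantor_top Y homeomorphic_space cantor_top"
  then obtain Y where "Y \<subseteq> scale_subspace A" "subtopology cantor_top Y homeomorphic_space cantor_top"
    by blast
  then obtain P where P: "continuous_map cantor_top cantor_top P" "inj P"
    and range_P: "range P \<subseteq> scale_subspace A - finite_support"
    using countable_finite_support by (rule cantor_copy_avoiding_countable)
  then have P_scale: "\<exists>a\<in>A. P w = range_char (scale a)" for w
    by (auto simp: scale_subspace_def)
  have "infinite {k. P w k}" for w
  proof -
    obtain a where "P w = range_char (scale a)" using P_scale by blast
    then show ?thesis
      using range_char_not_finite_support[OF strict_mono_scale, of a] by (simp add: finite_support_def)
  qed
  then obtain G where G: "\<And>w i. i < card {k. k < G i \<and> P w k}"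
    using uniform_counting_bound[OF P(1)] by blast
  have "range P \<subseteq> (\<lambda>a. range_char (scale a)) ` {a \<in> D. le_star (scale a) G}"
  proof
    fix z assume "z \<in> range P"
    then obtain w a where a: "a \<in> A" "z = P w" "P w = range_char (scale a)"
      using P_scale by blast
    have "le_star (scale a) G"
      using strict_mono_scale G[of _ w] unfolding a(3) by (rule le_star_if_counted)
    then show "z \<in> (\<lambda>a. range_char (scale a)) ` {a \<in> D. le_star (scale a) G}"
      using a assms by blast
  qed
  have "(UNIV :: (nat \<Rightarrow> bool) set) \<lesssim> range P"
    using eqpoll_imp_lepoll[OF eqpoll_sym[OF inj_on_image_eqpoll_self[OF P(2)]]] .
  also have "\<dots> \<lesssim> (\<lambda>a. range_char (scale a)) ` {a \<in> D. le_star (scale a) G}"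
    by (rule subset_imp_lepoll) fact
  also have "\<dots> \<lesssim> {a \<in> D. le_star (scale a) G}"
    by (rule image_lepoll)
  finally show False
    using below_d_bounded_scales not_below_d_if_continuum_lepoll by blast
qed

end

theorem mainTheorem10:
  fixes D :: "(nat \<Rightarrow> nat) set"
  assumes "dominating_min D"
  shows "Pow D \<lesssim> {X :: (nat \<Rightarrow> bool) set.
            totally_imperfect X \<and> menger_space (subtopology cantor_top X)}"
proof -
  interpret minimal_dominating D by unfold_locales (rule assms)
  have "scale_subspace ` Pow D \<subseteq>
      {X. totally_imperfect X \<and> menger_space (subtopology cantor_top X)}"
    using totally_imperfect_scale_subspace menger_scale_subspace by blast
  then show ?thesis
    unfolding lepoll_def using inj_scale_subspace inj_on_subset by blast
qed

end
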